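(* Let $X$ be a real vector space, $n\ge 2$, and let $(\cdot,\cdot\mid\cdot,\ldots,\cdot)$ be a weak $n$-inner product on $X$, with $\|x\mid x_n,\ldots,x_2\|:=\sqrt{(x,x\mid x_n,\ldots,x_2)}$. Fix $x_2,\ldots,x_n\in X$, let $Y=\mathrm{span}\{x_2,\ldots,x_n\}$ and let $X/Y=\{\hat x: x\in X\}$ with $\hat x=\{u\in X: u-x\in Y\}$. Then the function $\varphi:X/Y\to[0,\infty)$, $\varphi(\hat x):=\|x\mid x_n,\ldots,x_2\|$, is well defined and is a seminorm on $X/Y$. Moreover, if $x_2,\ldots,x_n$ are linearly independent, then $\varphi$ is a norm on $X/Y$.
   Context: A weak $n$-inner product ($n\ge2$) on a real vector space $X$ is a function $(\cdot,\cdot\mid\cdot,\ldots,\cdot):X^{n+1}\to\mathbb{R}$, written $(x,y\mid x_n,\ldots,x_2)$, such that for all $x,x',y,x_2,\ldots,x_n\in X$ and $\alpha\in\mathbb{R}$: (P1) $(x,x\mid x_n,\ldots,x_2)\ge 0$, with equality if and only if $x,x_2,\ldots,x_n$ are linearly dependent; (P2) $(x,x\mid x_n,\ldots,x_2)=(x_n,x_n\mid x,x_{n-1},\ldots,x_2)$; (P3) $(x,y\mid x_n,\ldots,x_2)=(y,x\mid x_n,\ldots,x_2)$; (P4) $(\alpha x,y\mid x_n,\ldots,x_2)=\alpha(x,y\mid x_n,\ldots,x_2)$; (P5) $(x+x',y\mid x_n,\ldots,x_2)=(x,y\mid x_n,\ldots,x_2)+(x',y\mid x_n,\ldots,x_2)$.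 *)

theory Defs
  imports "HOL-Analysis.Analysis"
begin

text \<open>A finite family (list) of vectors is linearly dependent iff some nontrivial
  linear combination vanishes (duplicates in the list count as dependence).\<close>
definition lin_dep_list :: "'a::real_vector list \<Rightarrow> bool" where
  "lin_dep_list xs \<longleftrightarrow>
     (\<exists>c::nat \<Rightarrow> real. (\<Sum>i<length xs. c i *\<^sub>R xs ! i) = 0 \<and> (\<exists>i<length xs. c i \<noteq> 0))"

text \<open>A weak n-inner product: ip x y [x_n, ..., x_2]; the list argument has length n-1.
  Only its values on lists of length n-1 are relevant.\<close>
definition weak_n_inner_product :: "nat \<Rightarrow> ('a::real_vector \<Rightarrow> 'a \<Rightarrow> 'a list \<Rightarrow> real) \<Rightarrow> bool" where
  "weak_n_inner_product n ip \<longleftrightarrow> 2 \<le> n \<and>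
     (\<forall>x zs. length zs = n - 1 \<longrightarrow>
        ip x x zs \<ge> 0 \<and> (ip x x zs = 0 \<longleftrightarrow> lin_dep_list (x # zs))) \<and>
     (\<forall>x z zs. length zs = n - 2 \<longrightarrow> ip x x (z # zs) = ip z z (x # zs)) \<and>
     (\<forall>x y zs. length zs = n - 1 \<longrightarrow> ip x y zs = ip y x zs) \<and>
     (\<forall>a x y zs. length zs = n - 1 \<longrightarrow> ip (a *\<^sub>R x) y zs = a * ip x y zs) \<and>
     (\<forall>x x' y zs. length zs = n - 1 \<longrightarrow> ip (x + x') y zs = ip x y zs + ip x' y zs)"

definition n_norm :: "('a::real_vector \<Rightarrow> 'a \<Rightarrow> 'a list \<Rightarrow> real) \<Rightarrow> 'a \<Rightarrow> 'a list \<Rightarrow> real" where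
  "n_norm ip x zs = sqrt (ip x x zs)"

definition coset :: "'a::real_vector list \<Rightarrow> 'a \<Rightarrow> 'a set" where
  "coset zs x = {u. u - x \<in> span (set zs)}"

definition quot_phi :: "('a::real_vector \<Rightarrow> 'a \<Rightarrow> 'a list \<Rightarrow> real) \<Rightarrow> 'a list \<Rightarrow> 'a set \<Rightarrow> real" where
  "quot_phi ip zs Q = (SOME r. \<exists>x. Q = coset zs x \<and> r = n_norm ip x zs)"

end

theory Submission
  imports Defs
begin

text \<open>With the last n-1 arguments frozen, a weak n-inner product is a symmetric positive
  semidefinite bilinear form whose null vectors are exactly the elements of
  Y = span {x_2, ..., x_n}. Cauchy-Schwarz for such a form makes \<open>x \<mapsto> sqrt (B x x)\<close> a
  seminorm that is constant on cosets of Y, hence a seminorm on X/Y; if x_2, ..., x_n are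
  independent, its null vectors lie in Y, i.e. are the zero coset.\<close>

lemma in_span_set_list_comb:
  fixes y :: "'a::real_vector"
  assumes "y \<in> span (set zs)"
  shows "\<exists>c. y = (\<Sum>i<length zs. c i *\<^sub>R zs ! i)"
  using assms
proof (induction zs arbitrary: y)
  case Nil
  then show ?case by simp
next
  case (Cons z zs)
  from Cons.prems obtain k where "y - k *\<^sub>R z \<in> span (set zs)"
    by (auto simp: span_insert)
  with Cons.IH obtain c where c: "y - k *\<^sub>R z = (\<Sum>i<length zs. c i *\<^sub>R zs ! i)" by blast
  define d where "d = (\<lambda>i. if i = 0 then k else c (i - 1))"
  have "(\<Sum>i<length (z # zs). d i *\<^sub>R (z # zs) ! i) = k *\<^sub>R z + (\<Sum>i<length zs. c i *\<^sub>R zs ! i)"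
    by (simp only: length_Cons sum.lessThan_Suc_shift) (simp add: d_def)
  also have "\<dots> = y" using c by (simp add: algebra_simps)
  finally show ?case by metis
qed

lemma lin_dep_list_Cons_if_in_span:
  fixes y :: "'a::real_vector"
  assumes "y \<in> span (set zs)"
  shows "lin_dep_list (y # zs)"
proof -
  from in_span_set_list_comb[OF assms]
  obtain c where c: "y = (\<Sum>i<length zs. c i *\<^sub>R zs ! i)" by blast
  define d where "d = (\<lambda>i. if i = 0 then 1 else - c (i - 1))"
  have "(\<Sum>i<length (y # zs). d i *\<^sub>R (y # zs) ! i) = y - (\<Sum>i<length zs. c i *\<^sub>R zs ! i)"
    by (simp only: length_Cons sum.lessThan_Suc_shift) (simp add: d_def sum_negf)
  also have "\<dots> = 0" using c by simp
  finally show ?thesis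
    unfolding lin_dep_list_def by (rule_tac x=d in exI) (auto simp: d_def)
qed

lemma in_span_if_lin_dep_list_Cons:
  fixes x :: "'a::real_vector"
  assumes "lin_dep_list (x # zs)" and "\<not> lin_dep_list zs"
  shows "x \<in> span (set zs)"
proof -
  from assms(1) obtain c where c: "(\<Sum>i<length (x # zs). c i *\<^sub>R (x # zs) ! i) = 0"
    and nontrivial: "\<exists>i<length (x # zs). c i \<noteq> 0"
    unfolding lin_dep_list_def by blast
  define s where "s = (\<Sum>i<length zs. c (Suc i) *\<^sub>R zs ! i)"
  have relation: "c 0 *\<^sub>R x + s = 0"
    using c unfolding s_def by (simp only: length_Cons sum.lessThan_Suc_shift) simp
  have "c 0 \<noteq> 0"
  proof
    assume "c 0 = 0"
    with nontrivial obtain j where "j < length zs" "c (Suc j) \<noteq> 0"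
      by (metis length_Cons less_Suc_eq_0_disj)
    moreover have "s = 0" using relation \<open>c 0 = 0\<close> by simp
    ultimately have "lin_dep_list zs"
      unfolding lin_dep_list_def s_def by (rule_tac x="\<lambda>i. c (Suc i)" in exI) auto
    with assms(2) show False by blast
  qed
  then have "x = (- 1 / c 0) *\<^sub>R s"
    using relation by (simp add: eq_neg_iff_add_eq_0 [symmetric] field_simps)
  moreover have "s \<in> span (set zs)"
    unfolding s_def by (intro span_sum span_scale span_base) auto
  ultimately show ?thesis by (metis span_scale)
qed

lemma coset_eq_iff: "coset zs x = coset zs u \<longleftrightarrow> u - x \<in> span (set zs)"
proof
  assume "coset zs x = coset zs u"
  moreover have "u \<in> coset zs u" by (simp add: coset_def span_zero)
  ultimately have "u \<in> coset zs x" by simp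
  then show "u - x \<in> span (set zs)" by (simp add: coset_def)
next
  assume ux: "u - x \<in> span (set zs)"
  have "v - x \<in> span (set zs) \<longleftrightarrow> v - u \<in> span (set zs)" for v
    using span_add[OF _ ux, of "v - u"] span_diff[OF _ ux, of "v - x"] by auto
  then show "coset zs x = coset zs u" by (simp add: coset_def)
qed

lemma quot_phi_coset:
  assumes "\<And>x u. coset zs x = coset zs u \<Longrightarrow> n_norm ip x zs = n_norm ip u zs"
  shows "quot_phi ip zs (coset zs x) = n_norm ip x zs"
  unfolding quot_phi_def
proof (rule someI2[of _ "n_norm ip x zs"])
  fix r assume "\<exists>x'. coset zs x = coset zs x' \<and> r = n_norm ip x' zs"
  then show "r = n_norm ip x zs" using assms by metis
qed blast

locale semi_inner_product =
  fixes B :: "'a::real_vector \<Rightarrow> 'a \<Rightarrow> real"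
  assumes nonneg: "B x x \<ge> 0"
    and sym: "B x y = B y x"
    and add_left: "B (x + x') y = B x y + B x' y"
    and scaleR_left: "B (a *\<^sub>R x) y = a * B x y"
begin

lemma add_right: "B x (y + y') = B x y + B x y'"
  by (metis sym add_left)

lemma scaleR_right: "B x (a *\<^sub>R y) = a * B x y"
  by (metis sym scaleR_left)

lemma add_scaleR_self:
  "B (x + t *\<^sub>R y) (x + t *\<^sub>R y) = B x x + 2 * t * B x y + t\<^sup>2 * B y y"
  by (simp add: add_left add_right scaleR_left scaleR_right sym[of y x]
      algebra_simps power2_eq_square)

lemma add_self: "B (x + y) (x + y) = B x x + 2 * B x y + B y y"
  using add_scaleR_self[of x 1 y] by simp

lemma Cauchy_Schwarz: "(B x y)\<^sup>2 \<le> B x x * B y y"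
proof -
  have quadratic_nonneg: "0 \<le> B x x + 2 * t * B x y + t\<^sup>2 * B y y" for t
    using nonneg add_scaleR_self by metis
  show ?thesis
  proof (cases "B y y = 0")
    case True
    have "B x y = 0"
    proof (rule ccontr)
      assume "B x y \<noteq> 0"
      then have "B x x + 2 * (- (B x x + 1) / (2 * B x y)) * B x y = -1"
        by (simp add: field_simps)
      with quadratic_nonneg[of "- (B x x + 1) / (2 * B x y)"] True show False by simp
    qed
    with True show ?thesis by simp
  next
    case False
    then have "B y y > 0" using nonneg[of y] by simp
    have "0 \<le> B x x + 2 * (- B x y / B y y) * B x y + (- B x y / B y y)\<^sup>2 * B y y"
      by (rule quadratic_nonneg)
    also have "\<dots> = B x x - (B x y)\<^sup>2 / B y y"
      using \<open>B y y > 0\<close> by (simp add: field_simps power2_eq_square)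
    finally show ?thesis using \<open>B y y > 0\<close> by (simp add: field_simps)
  qed
qed

lemma sqrt_scaleR: "sqrt (B (a *\<^sub>R x) (a *\<^sub>R x)) = \<bar>a\<bar> * sqrt (B x x)"
proof -
  have "B (a *\<^sub>R x) (a *\<^sub>R x) = a\<^sup>2 * B x x"
    by (simp add: scaleR_left scaleR_right power2_eq_square)
  then show ?thesis by (simp add: real_sqrt_mult)
qed

lemma sqrt_add_le: "sqrt (B (x + y) (x + y)) \<le> sqrt (B x x) + sqrt (B y y)"
proof -
  have "B x y \<le> sqrt (B x x * B y y)"
    using Cauchy_Schwarz real_le_rsqrt by blast
  then have "B (x + y) (x + y) \<le> (sqrt (B x x) + sqrt (B y y))\<^sup>2"
    using nonneg[of x] nonneg[of y]
    by (simp add: add_self power2_sum real_sqrt_mult)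
  then show ?thesis
    using nonneg[of x] nonneg[of y] by (simp add: real_le_lsqrt)
qed

lemma null_right: "B z z = 0 \<Longrightarrow> B x z = 0"
  using Cauchy_Schwarz[of x z] by simp

lemma add_null_self: "B z z = 0 \<Longrightarrow> B (x + z) (x + z) = B x x"
  by (simp add: add_self null_right)

end

lemma weak_n_inner_product_fixed_tail:
  assumes "weak_n_inner_product n ip" and "length zs = n - 1"
  shows "semi_inner_product (\<lambda>x y. ip x y zs)"
  using assms unfolding weak_n_inner_product_def by unfold_locales auto

lemma weak_n_inner_product_null_iff:
  assumes "weak_n_inner_product n ip" and "length zs = n - 1"
  shows "ip x x zs = 0 \<longleftrightarrow> lin_dep_list (x # zs)"
  using assms unfolding weak_n_inner_product_def by blast

theorem theorem2p3:
  fixes ip :: "'a::real_vector \<Rightarrow> 'a \<Rightarrow> 'a list \<Rightarrow> real"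
    and n :: nat and zs :: "'a list"
  assumes "weak_n_inner_product n ip"
    and "length zs = n - 1"
  shows "(\<forall>x u. coset zs x = coset zs u \<longrightarrow> n_norm ip x zs = n_norm ip u zs)
    \<and> (\<forall>x. quot_phi ip zs (coset zs x) = n_norm ip x zs)
    \<and> (\<forall>x. quot_phi ip zs (coset zs x) \<ge> 0)
    \<and> (\<forall>a x. quot_phi ip zs (coset zs (a *\<^sub>R x)) = \<bar>a\<bar> * quot_phi ip zs (coset zs x))
    \<and> (\<forall>x y. quot_phi ip zs (coset zs (x + y))
              \<le> quot_phi ip zs (coset zs x) + quot_phi ip zs (coset zs y))
    \<and> (\<not> lin_dep_list zs \<longrightarrow>
         (\<forall>x. quot_phi ip zs (coset zs x) = 0 \<longrightarrow> coset zs x = coset zs 0))"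
proof -
  interpret semi_inner_product "\<lambda>x y. ip x y zs"
    using weak_n_inner_product_fixed_tail[OF assms] .
  have null_iff: "ip x x zs = 0 \<longleftrightarrow> lin_dep_list (x # zs)" for x
    using weak_n_inner_product_null_iff[OF assms] .
  have well_defined: "n_norm ip x zs = n_norm ip u zs" if "coset zs x = coset zs u" for x u
  proof -
    have "u - x \<in> span (set zs)" using that by (simp add: coset_eq_iff)
    then have "ip (u - x) (u - x) zs = 0"
      using null_iff lin_dep_list_Cons_if_in_span by blast
    from add_null_self[OF this, of x] show ?thesis by (simp add: n_norm_def)
  qed
  note phi = quot_phi_coset[OF well_defined]
  have definite: "coset zs x = coset zs 0"
    if "\<not> lin_dep_list zs" and "quot_phi ip zs (coset zs x) = 0" for x
  proof -
    have "ip x x zs = 0" using that(2) nonneg[of x] by (simp add: phi n_norm_def)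
    with that(1) null_iff have "x \<in> span (set zs)" by (blast intro: in_span_if_lin_dep_list_Cons)
    then show ?thesis by (simp add: coset_eq_iff span_neg)
  qed
  have phi_nonneg: "quot_phi ip zs (coset zs x) \<ge> 0" for x
    by (simp add: phi n_norm_def nonneg)
  have phi_scaleR: "quot_phi ip zs (coset zs (a *\<^sub>R x)) = \<bar>a\<bar> * quot_phi ip zs (coset zs x)"
    for a x
    using sqrt_scaleR by (simp add: phi n_norm_def)
  have phi_add_le: "quot_phi ip zs (coset zs (x + y))
      \<le> quot_phi ip zs (coset zs x) + quot_phi ip zs (coset zs y)" for x y
    using sqrt_add_le by (simp add: phi n_norm_def)
  show ?thesis
    using well_defined phi phi_nonneg phi_scaleR phi_add_le definite by blast
qed

end
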